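(* Let $X$ be a topological space whose frame of open sets has a presentation $\mathcal{O}X=\langle G\mid R\rangle$, with quotient frame homomorphism $\overline{q}\colon\mathcal{O}(\Sigma^G)\to\mathcal{O}X$. Give $\mathcal{O}(\Sigma^G)$ and $\mathcal{O}X$ their Scott topologies, and let $\widetilde{\mathrm{ev}}\colon\mathcal{O}(\Sigma^G)\times X\to\Sigma$ be the continuous map with $\widetilde{\mathrm{ev}}(m,x)=\top$ iff $x\in\overline{q}(m)$. Suppose $\overline{q}$ has a continuous section $s\colon\mathcal{O}X\to\mathcal{O}(\Sigma^G)$ (i.e. $\overline{q}\circ s=\mathrm{id}$). Then $\mathcal{O}X$ with the Scott topology, together with the evaluation map $\widetilde{\mathrm{ev}}\circ(s\times X)$ (which sends $(U,x)$ to $\top$ iff $x\in U$), is the exponential $\Sigma^X$ in the category $\mathrm{Top}$ of topological spaces; in particular $X$ is locally compact (i.e. $\mathcal{O}X$ is a continuous lattice).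
   Context: Frames: complete lattices where finite meets distribute over arbitrary joins. $\Sigma$ is Sierpiński space $\{\bot,\top\}$ with open sets $\emptyset,\{\top\},\{\bot,\top\}$. For a set $G$, $\mathcal{O}(\Sigma^G)$ is the free frame on $G$. A presentation $\mathcal{O}X=\langle G\mid R\rangle$ means the frame of opens of $X$ is the quotient of the free frame on $G$ by the congruence generated by the relations $R$, with quotient map $\overline{q}$; a point $x\in X$ "lies in" $m\in\mathcal{O}(\Sigma^G)$ iff $x\in\overline{q}(m)$. Scott topology: $V$ is open iff it is an upset and whenever the join of a directed set lies in $V$ some member of the set does. The way-below relation: $a\ll b$ iff whenever $b\le\bigvee D$ for directed $D$, $a\le d$ for some $d\in D$; a lattice is continuous if every $b$ is the directed join of $\{a\mid a\ll b\}$. *)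

theory Defs
  imports "HOL-Analysis.Analysis"
begin

definition sierpinski :: "bool topology" where
  "sierpinski = topology (\<lambda>U. U \<in> {{}, {True}, UNIV})"

text \<open>The space Sigma^G (product of copies of Sierpinski space indexed by G);
  its frame of opens is the free frame on G.\<close>
definition sigma_pow :: "'g set \<Rightarrow> ('g \<Rightarrow> bool) topology" where
  "sigma_pow G = product_topology (\<lambda>_. sierpinski) G"

definition opens :: "'a topology \<Rightarrow> 'a set set" where
  "opens T = {U. openin T U}"

definition directed_fam :: "'a set set \<Rightarrow> bool" where
  "directed_fam D \<longleftrightarrow> D \<noteq> {} \<and> (\<forall>a\<in>D. \<forall>b\<in>D. \<exists>c\<in>D. a \<subseteq> c \<and> b \<subseteq> c)"

text \<open>Scott topology on a complete lattice L of sets in which joins are unions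
  (as is the case for a frame of opens).\<close>
definition scott_open :: "'a set set \<Rightarrow> 'a set set \<Rightarrow> bool" where
  "scott_open L V \<longleftrightarrow> V \<subseteq> L \<and> (\<forall>U\<in>V. \<forall>W\<in>L. U \<subseteq> W \<longrightarrow> W \<in> V)
     \<and> (\<forall>D. D \<subseteq> L \<and> directed_fam D \<and> \<Union>D \<in> V \<longrightarrow> (\<exists>d\<in>D. d \<in> V))"

definition scott_topology :: "'a set set \<Rightarrow> 'a set topology" where
  "scott_topology L = topology (scott_open L)"

definition way_below :: "'a set set \<Rightarrow> 'a set \<Rightarrow> 'a set \<Rightarrow> bool" where
  "way_below L a b \<longleftrightarrow> (\<forall>D. D \<subseteq> L \<and> directed_fam D \<and> b \<subseteq> \<Union>D \<longrightarrow> (\<exists>d\<in>D. a \<subseteq> d))"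

definition continuous_lattice :: "'a set set \<Rightarrow> bool" where
  "continuous_lattice L \<longleftrightarrow> (\<forall>b\<in>L. directed_fam {a\<in>L. way_below L a b}
      \<and> b = \<Union>{a\<in>L. way_below L a b})"

definition frame_hom :: "'a topology \<Rightarrow> 'b topology \<Rightarrow> ('a set \<Rightarrow> 'b set) \<Rightarrow> bool" where
  "frame_hom T S h \<longleftrightarrow> (\<forall>U. openin T U \<longrightarrow> openin S (h U))
     \<and> h (topspace T) = topspace S
     \<and> (\<forall>U V. openin T U \<longrightarrow> openin T V \<longrightarrow> h (U \<inter> V) = h U \<inter> h V)
     \<and> (\<forall>\<U>. (\<forall>U\<in>\<U>. openin T U) \<longrightarrow> h (\<Union>\<U>) = \<Union>(h ` \<U>))"

definition frame_congruence :: "'a topology \<Rightarrow> ('a set \<times> 'a set) set \<Rightarrow> bool" where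
  "frame_congruence T \<theta> \<longleftrightarrow> equiv (opens T) \<theta>
     \<and> (\<forall>U U' V V'. (U, U') \<in> \<theta> \<longrightarrow> (V, V') \<in> \<theta> \<longrightarrow> (U \<inter> V, U' \<inter> V') \<in> \<theta>)
     \<and> (\<forall>P. P \<subseteq> \<theta> \<longrightarrow> (\<Union>(fst ` P), \<Union>(snd ` P)) \<in> \<theta>)"

definition congruence_generated :: "'a topology \<Rightarrow> ('a set \<times> 'a set) set \<Rightarrow> ('a set \<times> 'a set) set" where
  "congruence_generated T R = \<Inter>{\<theta>. frame_congruence T \<theta> \<and> R \<subseteq> \<theta>}"

definition is_presentation ::
  "'x topology \<Rightarrow> 'g set \<Rightarrow> (('g \<Rightarrow> bool) set \<times> ('g \<Rightarrow> bool) set) set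
     \<Rightarrow> (('g \<Rightarrow> bool) set \<Rightarrow> 'x set) \<Rightarrow> bool" where
  "is_presentation X G R q \<longleftrightarrow>
     R \<subseteq> opens (sigma_pow G) \<times> opens (sigma_pow G)
     \<and> frame_hom (sigma_pow G) X q
     \<and> q ` opens (sigma_pow G) = opens X
     \<and> {(U, V). U \<in> opens (sigma_pow G) \<and> V \<in> opens (sigma_pow G) \<and> q U = q V}
         = congruence_generated (sigma_pow G) R"

end

(* Every b in O X is q (s b), and s b is the directed union of the compact open boxes of
   Sigma^G inside it. As q preserves joins and the Scott continuous s pulls back the Scott
   open filter of a compact set K, every Scott neighbourhood V of b contains some a = q K such
   that b lies in the Scott interior of the principal filter of a. This interpolation property
   alone yields that O X is a continuous lattice, that evaluation is jointly continuous, and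
   that the transpose y \<mapsto> {x. f (y, x)} of a continuous f : Y \<times> X \<rightarrow> Sigma is Scott
   continuous; uniqueness of the transpose holds because evaluation recovers membership. *)

theory Submission
  imports Defs
begin

lemma directed_famI:
  assumes "d \<in> D" "\<And>a b. a \<in> D \<Longrightarrow> b \<in> D \<Longrightarrow> \<exists>c\<in>D. a \<subseteq> c \<and> b \<subseteq> c"
  shows "directed_fam D"
  unfolding directed_fam_def using assms by auto

lemma directed_famD:
  assumes "directed_fam D"
  shows directed_fam_nonempty: "\<exists>d. d \<in> D"
    and directed_fam_upper_bound: "a \<in> D \<Longrightarrow> b \<in> D \<Longrightarrow> \<exists>c\<in>D. a \<subseteq> c \<and> b \<subseteq> c"
  using assms unfolding directed_fam_def by auto

lemma directed_fam_Un_closed: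
  assumes "d \<in> D" "\<And>a b. a \<in> D \<Longrightarrow> b \<in> D \<Longrightarrow> a \<union> b \<in> D"
  shows "directed_fam D"
  using assms by (intro directed_famI) blast+

lemma scott_openD:
  assumes "scott_open L V"
  shows scott_open_subset: "V \<subseteq> L"
    and scott_open_upward: "U \<in> V \<Longrightarrow> W \<in> L \<Longrightarrow> U \<subseteq> W \<Longrightarrow> W \<in> V"
    and scott_open_directed: "D \<subseteq> L \<Longrightarrow> directed_fam D \<Longrightarrow> \<Union>D \<in> V \<Longrightarrow> \<exists>d\<in>D. d \<in> V"
  using assms unfolding scott_open_def by blast+

lemma scott_openI:
  assumes "V \<subseteq> L" "\<And>U W. U \<in> V \<Longrightarrow> W \<in> L \<Longrightarrow> U \<subseteq> W \<Longrightarrow> W \<in> V"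
    "\<And>D. D \<subseteq> L \<Longrightarrow> directed_fam D \<Longrightarrow> \<Union>D \<in> V \<Longrightarrow> \<exists>d\<in>D. d \<in> V"
  shows "scott_open L V"
  unfolding scott_open_def using assms by blast

lemma istopology_scott_open: "istopology (scott_open L)"
  unfolding istopology_def
proof (intro conjI allI impI)
  fix S T assume S: "scott_open L S" and T: "scott_open L T"
  show "scott_open L (S \<inter> T)"
  proof (rule scott_openI)
    fix D assume D: "D \<subseteq> L" "directed_fam D" "\<Union>D \<in> S \<inter> T"
    then obtain d1 d2 where "d1 \<in> D" "d1 \<in> S" "d2 \<in> D" "d2 \<in> T"
      using scott_open_directed[OF S] scott_open_directed[OF T] by blast
    moreover from this obtain c where "c \<in> D" "d1 \<subseteq> c" "d2 \<subseteq> c"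
      using directed_fam_upper_bound[OF D(2)] by blast
    ultimately show "\<exists>d\<in>D. d \<in> S \<inter> T"
      using D(1) scott_open_upward[OF S] scott_open_upward[OF T] by blast
  qed (use scott_open_subset[OF S] scott_open_upward[OF S] scott_open_upward[OF T] in blast)+
next
  fix \<K> assume "\<forall>K\<in>\<K>. scott_open L K"
  then show "scott_open L (\<Union>\<K>)"
    by (intro scott_openI) (blast dest: scott_open_subset scott_open_upward scott_open_directed)+
qed

lemma openin_scott_topology: "openin (scott_topology L) V \<longleftrightarrow> scott_open L V"
  unfolding scott_topology_def by (simp only: topology_inverse'[OF istopology_scott_open])

lemma topspace_scott_topology: "topspace (scott_topology L) = L"
proof -
  have "scott_open L L"
    by (rule scott_openI) (blast dest: directed_fam_nonempty)+
  then show ?thesis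
    unfolding topspace_def openin_scott_topology by (blast dest: scott_open_subset)
qed

lemma opens_Union: "D \<subseteq> opens X \<Longrightarrow> \<Union>D \<in> opens X"
  unfolding opens_def by (auto intro: openin_Union)

lemma scott_open_contains_point: "scott_open (opens X) {U \<in> opens X. x \<in> U}"
  by (rule scott_openI) blast+

lemma directed_fam_finite_Union_le:
  assumes "directed_fam D" "finite F" "F \<subseteq> D"
  shows "\<exists>d\<in>D. \<Union>F \<subseteq> d"
  using assms(2,3)
proof (induction F rule: finite_induct)
  case empty
  then show ?case
    using directed_fam_nonempty[OF assms(1)] by auto
next
  case (insert x F)
  then obtain d where "d \<in> D" "\<Union>F \<subseteq> d"
    by auto
  moreover obtain c where "c \<in> D" "x \<subseteq> c" "d \<subseteq> c"
    using directed_fam_upper_bound[OF assms(1) _ \<open>d \<in> D\<close>, of x] insert.prems by auto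
  ultimately show ?case by auto
qed

lemma scott_open_compact_upset:
  assumes "compactin T K"
  shows "scott_open (opens T) {W \<in> opens T. K \<subseteq> W}"
proof (rule scott_openI)
  fix D assume D: "D \<subseteq> opens T" "directed_fam D" "\<Union>D \<in> {W \<in> opens T. K \<subseteq> W}"
  have "\<forall>U\<in>D. openin T U"
    using D(1) unfolding opens_def by blast
  moreover have "K \<subseteq> \<Union>D"
    using D(3) by blast
  ultimately obtain F where F: "finite F" "F \<subseteq> D" "K \<subseteq> \<Union>F"
    using assms unfolding compactin_def by blast
  then obtain d where "d \<in> D" "\<Union>F \<subseteq> d"
    using directed_fam_finite_Union_le[OF D(2) F(1,2)] by auto
  then show "\<exists>d\<in>D. d \<in> {W \<in> opens T. K \<subseteq> W}"
    using D(1) F(3) by (intro bexI[of _ d]) auto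
qed auto

lemma openin_sierpinski: "openin sierpinski U \<longleftrightarrow> U \<in> {{}, {True}, UNIV}"
proof -
  have "istopology (\<lambda>U. U \<in> {{}, {True}, UNIV :: bool set})"
    unfolding istopology_def
  proof (intro conjI allI impI)
    fix \<K> :: "bool set set" assume "\<forall>K\<in>\<K>. K \<in> {{}, {True}, UNIV}"
    then show "\<Union>\<K> \<in> {{}, {True}, UNIV}" by fast
  qed auto
  then show ?thesis unfolding sierpinski_def by simp
qed

lemma topspace_sierpinski: "topspace sierpinski = UNIV"
  using openin_subset[of sierpinski UNIV] by (auto simp: openin_sierpinski)

lemma continuous_map_sierpinski_iff:
  "continuous_map T sierpinski f \<longleftrightarrow> openin T {x \<in> topspace T. f x}"
proof
  assume "continuous_map T sierpinski f"
  then have "openin T {x \<in> topspace T. f x \<in> {True}}"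
    by (simp add: continuous_map_def openin_sierpinski)
  then show "openin T {x \<in> topspace T. f x}" by simp
next
  assume "openin T {x \<in> topspace T. f x}"
  moreover have "{x \<in> topspace T. f x \<in> {True}} = {x \<in> topspace T. f x}" by auto
  ultimately show "continuous_map T sierpinski f"
    by (auto simp: continuous_map_def openin_sierpinski topspace_sierpinski)
qed

lemma product_topology_compact_open_nbhd:
  assumes fin: "\<And>i. i \<in> I \<Longrightarrow> finite (topspace (T i))"
    and "openin (product_topology T I) Om" "p \<in> Om"
  shows "\<exists>K. compactin (product_topology T I) K \<and> openin (product_topology T I) K \<and> p \<in> K \<and> K \<subseteq> Om"
proof -
  obtain U where U: "finite {i \<in> I. U i \<noteq> topspace (T i)}" "\<forall>i\<in>I. openin (T i) (U i)"
    "p \<in> Pi\<^sub>E I U" "Pi\<^sub>E I U \<subseteq> Om"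
    using assms(2,3) unfolding openin_product_topology_alt by blast
  have "compactin (T i) (U i)" if "i \<in> I" for i
    using that fin U(2) by (meson finite_imp_compactin openin_subset rev_finite_subset)
  then have "compactin (product_topology T I) (Pi\<^sub>E I U)"
    by (simp add: compactin_PiE)
  moreover have "openin (product_topology T I) (Pi\<^sub>E I U)"
    using U(1,2) by (simp add: openin_PiE_gen)
  ultimately show ?thesis using U(3,4) by blast
qed

lemma sigma_pow_compact_open_nbhd:
  "openin (sigma_pow G) Om \<Longrightarrow> p \<in> Om \<Longrightarrow>
     \<exists>K. compactin (sigma_pow G) K \<and> openin (sigma_pow G) K \<and> p \<in> K \<and> K \<subseteq> Om"
  unfolding sigma_pow_def by (rule product_topology_compact_open_nbhd) (simp_all add: topspace_sierpinski)

lemma frame_hom_openin: "frame_hom S X q \<Longrightarrow> openin S U \<Longrightarrow> openin X (q U)"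
  unfolding frame_hom_def by simp

lemma frame_hom_Union:
  "frame_hom S X q \<Longrightarrow> \<forall>U\<in>\<U>. openin S U \<Longrightarrow> q (\<Union>\<U>) = \<Union>(q ` \<U>)"
  unfolding frame_hom_def by simp

lemma frame_hom_mono:
  assumes "frame_hom S X q" "openin S U" "openin S V" "U \<subseteq> V"
  shows "q U \<subseteq> q V"
proof -
  have "q U = q (U \<inter> V)"
    using assms(4) by (simp add: Int_absorb2)
  also have "\<dots> = q U \<inter> q V"
    using assms(1-3) unfolding frame_hom_def by simp
  finally show ?thesis by auto
qed

lemma directed_fam_image_Un_closed:
  assumes "d \<in> D" "\<And>a b. a \<in> D \<Longrightarrow> b \<in> D \<Longrightarrow> a \<union> b \<in> D"
    and "\<And>a b. a \<in> D \<Longrightarrow> b \<in> D \<Longrightarrow> a \<subseteq> b \<Longrightarrow> f a \<subseteq> f b"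
  shows "directed_fam (f ` D)"
proof (rule directed_famI)
  show "f d \<in> f ` D"
    using assms(1) by simp
  fix a' b' assume "a' \<in> f ` D" "b' \<in> f ` D"
  then obtain a b where "a \<in> D" "b \<in> D" "a' = f a" "b' = f b"
    by auto
  then show "\<exists>c\<in>f ` D. a' \<subseteq> c \<and> b' \<subseteq> c"
    using assms(2)[of a b] assms(3)[of a "a \<union> b"] assms(3)[of b "a \<union> b"]
    by (intro bexI[of _ "f (a \<union> b)"]) auto
qed

definition scott_approximable :: "'a set set \<Rightarrow> bool" where
  "scott_approximable L \<longleftrightarrow> (\<forall>V b. scott_open L V \<and> b \<in> V \<longrightarrow>
     (\<exists>a\<in>V. \<exists>W. scott_open L W \<and> b \<in> W \<and> (\<forall>U\<in>W. a \<subseteq> U)))"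

lemma scott_approximable_if_scott_continuous_section:
  assumes hom: "frame_hom S X q"
    and base: "\<And>Om p. openin S Om \<Longrightarrow> p \<in> Om \<Longrightarrow>
                 \<exists>K. compactin S K \<and> openin S K \<and> p \<in> K \<and> K \<subseteq> Om"
    and s_cont: "continuous_map (scott_topology (opens X)) (scott_topology (opens S)) s"
    and s_sect: "\<forall>U\<in>opens X. q (s U) = U"
  shows "scott_approximable (opens X)"
  unfolding scott_approximable_def
proof (intro allI impI)
  fix V b assume Vb: "scott_open (opens X) V \<and> b \<in> V"
  then have b: "b \<in> opens X"
    using scott_open_subset by blast
  have s_opens: "s U \<in> opens S" if "U \<in> opens X" for U
    using s_cont that unfolding continuous_map_def topspace_scott_topology by blast
  define KK where "KK = {K. compactin S K \<and> openin S K \<and> K \<subseteq> s b}"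
  have "s b \<subseteq> \<Union>KK"
  proof
    fix p assume "p \<in> s b"
    then obtain K where "compactin S K" "openin S K" "p \<in> K" "K \<subseteq> s b"
      using base[of "s b" p] s_opens[OF b] unfolding opens_def by auto
    then show "p \<in> \<Union>KK"
      unfolding KK_def by auto
  qed
  then have "s b = \<Union>KK"
    unfolding KK_def by auto
  have "b = q (s b)"
    using s_sect b by simp
  also have "\<dots> = q (\<Union>KK)"
    using \<open>s b = \<Union>KK\<close> by simp
  also have "\<dots> = \<Union>(q ` KK)"
    by (rule frame_hom_Union[OF hom]) (simp add: KK_def)
  finally have "\<Union>(q ` KK) \<in> V"
    using Vb by simp
  moreover have "directed_fam (q ` KK)"
  proof (rule directed_fam_image_Un_closed)
    show "{} \<in> KK"
      unfolding KK_def by simp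
    show "K1 \<union> K2 \<in> KK" if "K1 \<in> KK" "K2 \<in> KK" for K1 K2
      using that unfolding KK_def by (auto intro: compactin_Un)
    show "q K1 \<subseteq> q K2" if "K1 \<in> KK" "K2 \<in> KK" "K1 \<subseteq> K2" for K1 K2
      using that unfolding KK_def by (intro frame_hom_mono[OF hom]) auto
  qed
  moreover have "q ` KK \<subseteq> opens X"
    unfolding KK_def opens_def by (auto intro: frame_hom_openin[OF hom])
  ultimately obtain K where K: "K \<in> KK" "q K \<in> V"
    using scott_open_directed[of "opens X" V "q ` KK"] Vb by auto
  define W where "W = {U \<in> opens X. s U \<in> {O' \<in> opens S. K \<subseteq> O'}}"
  have "openin (scott_topology (opens X)) {U \<in> topspace (scott_topology (opens X)). s U \<in> {O' \<in> opens S. K \<subseteq> O'}}"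
    using s_cont scott_open_compact_upset[of S K] K(1)
    unfolding continuous_map_def openin_scott_topology KK_def by auto
  then have "scott_open (opens X) W"
    unfolding W_def openin_scott_topology topspace_scott_topology .
  moreover have "b \<in> W"
    using b s_opens[OF b] K(1) unfolding W_def KK_def by auto
  moreover have "q K \<subseteq> U" if "U \<in> W" for U
  proof -
    have "q K \<subseteq> q (s U)"
      using that K(1) unfolding W_def KK_def opens_def by (intro frame_hom_mono[OF hom]) auto
    then show ?thesis
      using that s_sect unfolding W_def by auto
  qed
  ultimately show "\<exists>a\<in>V. \<exists>W. scott_open (opens X) W \<and> b \<in> W \<and> (\<forall>U\<in>W. a \<subseteq> U)"
    using K(2) by auto
qed

lemma way_below_le:
  assumes "way_below L a b" "b \<in> L"
  shows "a \<subseteq> b"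
proof -
  have "directed_fam {b}"
    by (rule directed_famI) auto
  then show ?thesis
    using assms(1)[unfolded way_below_def, rule_format, of "{b}"] assms(2) by auto
qed

lemma way_below_empty: "way_below L {} b"
  unfolding way_below_def by (auto dest: directed_fam_nonempty)

lemma way_below_Un:
  assumes "way_below L a1 b" "way_below L a2 b"
  shows "way_below L (a1 \<union> a2) b"
  unfolding way_below_def
proof (intro allI impI)
  fix D assume D: "D \<subseteq> L \<and> directed_fam D \<and> b \<subseteq> \<Union>D"
  then obtain d1 d2 where "d1 \<in> D" "a1 \<subseteq> d1" "d2 \<in> D" "a2 \<subseteq> d2"
    using assms[unfolded way_below_def, rule_format, of D] by blast
  moreover from this obtain c where "c \<in> D" "d1 \<subseteq> c" "d2 \<subseteq> c"
    using directed_fam_upper_bound[of D d1 d2] D by blast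
  ultimately have "c \<in> D" "a1 \<union> a2 \<subseteq> c"
    by auto
  then show "\<exists>d\<in>D. a1 \<union> a2 \<subseteq> d" ..
qed

lemma way_below_if_scott_interior:
  assumes "scott_open (opens X) W" "b \<in> W" "\<forall>U\<in>W. a \<subseteq> U"
  shows "way_below (opens X) a b"
  unfolding way_below_def
proof (intro allI impI)
  fix D assume D: "D \<subseteq> opens X \<and> directed_fam D \<and> b \<subseteq> \<Union>D"
  then have "\<Union>D \<in> opens X"
    by (simp add: opens_Union)
  then have "\<Union>D \<in> W"
    using scott_open_upward[OF assms(1,2)] D by blast
  then obtain d where "d \<in> D" "d \<in> W"
    using scott_open_directed[OF assms(1), of D] D by auto
  then show "\<exists>d\<in>D. a \<subseteq> d"
    using assms(3) by auto
qed

lemma continuous_lattice_opens_if_scott_approximable: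
  assumes approx: "scott_approximable (opens X)"
  shows "continuous_lattice (opens X)"
  unfolding continuous_lattice_def
proof (intro ballI conjI)
  fix b assume b: "b \<in> opens X"
  define A where "A = {a \<in> opens X. way_below (opens X) a b}"
  have "{} \<in> A"
    unfolding A_def opens_def by (simp add: way_below_empty)
  moreover have "a1 \<union> a2 \<in> A" if "a1 \<in> A" "a2 \<in> A" for a1 a2
    using that unfolding A_def opens_def by (auto intro: way_below_Un)
  ultimately show "directed_fam A"
    by (rule directed_fam_Un_closed)
  have "x \<in> \<Union>A" if "x \<in> b" for x
  proof -
    obtain a W where "a \<in> opens X" "x \<in> a" "scott_open (opens X) W" "b \<in> W" "\<forall>U\<in>W. a \<subseteq> U"
      using approx scott_open_contains_point[of X x] b \<open>x \<in> b\<close>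
      unfolding scott_approximable_def by blast
    then show ?thesis
      using way_below_if_scott_interior unfolding A_def by blast
  qed
  then show "b = \<Union>A"
    using way_below_le b unfolding A_def by blast
qed

lemma continuous_map_scott_membership:
  assumes approx: "scott_approximable (opens X)"
  shows "continuous_map (prod_topology (scott_topology (opens X)) X) sierpinski (\<lambda>(U, x). x \<in> U)"
  unfolding continuous_map_sierpinski_iff
proof (subst openin_subopen, intro ballI)
  let ?E = "prod_topology (scott_topology (opens X)) X"
  fix z assume "z \<in> {z \<in> topspace ?E. case z of (U, x) \<Rightarrow> x \<in> U}"
  then obtain b x where z: "z = (b, x)" "b \<in> opens X" "x \<in> b"
    by (auto simp: topspace_scott_topology)
  then obtain a W where aW: "a \<in> opens X" "x \<in> a" "scott_open (opens X) W" "b \<in> W" "\<forall>U\<in>W. a \<subseteq> U"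
    using approx scott_open_contains_point[of X x] unfolding scott_approximable_def by blast
  have "openin ?E (W \<times> a)"
    using aW(1,3) by (simp add: openin_prod_Times_iff openin_scott_topology opens_def)
  moreover have "W \<times> a \<subseteq> {z \<in> topspace ?E. case z of (U, x) \<Rightarrow> x \<in> U}"
    using aW(1,3,5) scott_open_subset[OF aW(3)] openin_subset[of X a]
    by (auto simp: topspace_scott_topology opens_def)
  ultimately show "\<exists>T. openin ?E T \<and> z \<in> T \<and> T \<subseteq> {z \<in> topspace ?E. case z of (U, x) \<Rightarrow> x \<in> U}"
    using z aW(2,4) by blast
qed

lemma sierpinski_slice_directed_Union:
  assumes f: "continuous_map (prod_topology Y X) sierpinski f" and y: "y \<in> topspace Y"
  defines "D \<equiv> {B. openin X B \<and> (\<exists>N. openin Y N \<and> y \<in> N \<and> (\<forall>y'\<in>N. \<forall>x\<in>B. f (y', x)))}"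
  shows "directed_fam D" and "D \<subseteq> opens X" and "{x \<in> topspace X. f (y, x)} = \<Union>D"
proof -
  have "{} \<in> D"
    using y unfolding D_def by (intro CollectI conjI exI[of _ "topspace Y"]) auto
  moreover have "B1 \<union> B2 \<in> D" if B: "B1 \<in> D" "B2 \<in> D" for B1 B2
  proof -
    obtain N1 where N1: "openin Y N1" "y \<in> N1" "\<forall>y'\<in>N1. \<forall>x\<in>B1. f (y', x)"
      using B(1) unfolding D_def by auto
    obtain N2 where N2: "openin Y N2" "y \<in> N2" "\<forall>y'\<in>N2. \<forall>x\<in>B2. f (y', x)"
      using B(2) unfolding D_def by auto
    have "openin X (B1 \<union> B2)"
      using B unfolding D_def by auto
    then show ?thesis
      using N1 N2 unfolding D_def by (intro CollectI conjI exI[of _ "N1 \<inter> N2"]) auto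
  qed
  ultimately show "directed_fam D"
    by (rule directed_fam_Un_closed)
  show "D \<subseteq> opens X"
    unfolding D_def opens_def by blast
  have "openin (prod_topology Y X) {z \<in> topspace (prod_topology Y X). f z}"
    using f by (simp add: continuous_map_sierpinski_iff)
  then have "\<exists>N B. openin Y N \<and> openin X B \<and> y \<in> N \<and> x \<in> B \<and> N \<times> B \<subseteq> {z \<in> topspace (prod_topology Y X). f z}"
    if "x \<in> topspace X" "f (y, x)" for x
    using that y unfolding openin_prod_topology_alt by simp
  then have "{x \<in> topspace X. f (y, x)} \<subseteq> \<Union>D"
    unfolding D_def by fast
  moreover have "\<Union>D \<subseteq> {x \<in> topspace X. f (y, x)}"
    unfolding D_def by (blast dest: openin_subset)
  ultimately show "{x \<in> topspace X. f (y, x)} = \<Union>D" by blast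
qed

lemma continuous_map_scott_transpose:
  assumes approx: "scott_approximable (opens X)"
    and f: "continuous_map (prod_topology Y X) sierpinski f"
  shows "continuous_map Y (scott_topology (opens X)) (\<lambda>y. {x \<in> topspace X. f (y, x)})"
proof -
  define h where "h = (\<lambda>y. {x \<in> topspace X. f (y, x)})"
  have h_opens: "h y \<in> opens X" if "y \<in> topspace Y" for y
    using sierpinski_slice_directed_Union(2,3)[OF f that] unfolding h_def by (simp add: opens_Union)
  have "openin Y {y \<in> topspace Y. h y \<in> V}" if V: "scott_open (opens X) V" for V
  proof (subst openin_subopen, intro ballI)
    fix y0 assume y0: "y0 \<in> {y \<in> topspace Y. h y \<in> V}"
    then obtain a W where aW: "a \<in> V" "scott_open (opens X) W" "h y0 \<in> W" "\<forall>U\<in>W. a \<subseteq> U"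
      using approx[unfolded scott_approximable_def, rule_format, of V "h y0"] V by auto
    (* some B of the directed family with union h y0 lies in W, so a \<subseteq> B \<subseteq> h y on N *)
    define D where "D = {B. openin X B \<and> (\<exists>N. openin Y N \<and> y0 \<in> N \<and> (\<forall>y\<in>N. \<forall>x\<in>B. f (y, x)))}"
    have "y0 \<in> topspace Y"
      using y0 by simp
    note slice = sierpinski_slice_directed_Union[OF f this, folded D_def]
    have "\<Union>D \<in> W"
      using aW(3) slice(3) unfolding h_def by simp
    then obtain B where "B \<in> D" "B \<in> W"
      using scott_open_directed[OF aW(2) slice(2,1)] by auto
    then obtain N where BN: "openin X B" "a \<subseteq> B" "openin Y N" "y0 \<in> N" "\<forall>y\<in>N. \<forall>x\<in>B. f (y, x)"
      using aW(4) unfolding D_def by auto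
    have "h y \<in> V" if "y \<in> N" for y
    proof -
      have "y \<in> topspace Y"
        using openin_subset[OF BN(3)] that by auto
      moreover have "a \<subseteq> h y"
        using BN(2,5) openin_subset[OF BN(1)] that unfolding h_def by auto
      ultimately show ?thesis
        using scott_open_upward[OF V aW(1) h_opens] by auto
    qed
    then show "\<exists>T. openin Y T \<and> y0 \<in> T \<and> T \<subseteq> {y \<in> topspace Y. h y \<in> V}"
      using BN(3,4) openin_subset[OF BN(3)] by (intro exI[of _ N]) auto
  qed
  then have "continuous_map Y (scott_topology (opens X)) h"
    unfolding continuous_map_def topspace_scott_topology openin_scott_topology
    using h_opens by auto
  then show ?thesis
    unfolding h_def .
qed

lemma scott_opens_universal_property:
  assumes approx: "scott_approximable (opens X)"
    and ev: "\<forall>U\<in>opens X. \<forall>x. ev (U, x) \<longleftrightarrow> x \<in> U"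
    and f: "continuous_map (prod_topology Y X) sierpinski f"
  shows "\<exists>h. continuous_map Y (scott_topology (opens X)) h
    \<and> (\<forall>y\<in>topspace Y. \<forall>x\<in>topspace X. ev (h y, x) = f (y, x))
    \<and> (\<forall>h'. continuous_map Y (scott_topology (opens X)) h'
           \<and> (\<forall>y\<in>topspace Y. \<forall>x\<in>topspace X. ev (h' y, x) = f (y, x))
           \<longrightarrow> (\<forall>y\<in>topspace Y. h' y = h y))"
proof -
  have opens_if_continuous: "h y \<in> opens X"
    if "continuous_map Y (scott_topology (opens X)) h" "y \<in> topspace Y" for h y
    using that unfolding continuous_map_def topspace_scott_topology by auto
  define h where "h = (\<lambda>y. {x \<in> topspace X. f (y, x)})"
  have h_cont: "continuous_map Y (scott_topology (opens X)) h"
    unfolding h_def using continuous_map_scott_transpose[OF approx f] .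
  show ?thesis
  proof (intro exI[of _ h] conjI allI impI ballI)
    fix y x assume "y \<in> topspace Y" "x \<in> topspace X"
    then show "ev (h y, x) = f (y, x)"
      using opens_if_continuous[OF h_cont] ev unfolding h_def by auto
  next
    fix h' y
    assume h': "continuous_map Y (scott_topology (opens X)) h'
      \<and> (\<forall>y\<in>topspace Y. \<forall>x\<in>topspace X. ev (h' y, x) = f (y, x))"
      and y: "y \<in> topspace Y"
    then have "h' y \<in> opens X"
      using opens_if_continuous by blast
    have "x \<in> h' y \<longleftrightarrow> f (y, x)" if "x \<in> topspace X" for x
    proof -
      have "ev (h' y, x) = f (y, x)"
        using h' y that by blast
      moreover have "ev (h' y, x) \<longleftrightarrow> x \<in> h' y"
        using ev \<open>h' y \<in> opens X\<close> by blast
      ultimately show ?thesis by simp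
    qed
    moreover have "h' y \<subseteq> topspace X"
      using \<open>h' y \<in> opens X\<close> unfolding opens_def by (simp add: openin_subset)
    ultimately show "h' y = h y"
      unfolding h_def by auto
  qed (rule h_cont)
qed

theorem proposition3p5:
  fixes X :: "'x topology" and G :: "'g set"
    and R :: "(('g \<Rightarrow> bool) set \<times> ('g \<Rightarrow> bool) set) set"
    and q :: "('g \<Rightarrow> bool) set \<Rightarrow> 'x set"
    and s :: "'x set \<Rightarrow> ('g \<Rightarrow> bool) set"
  assumes pres: "is_presentation X G R q"
    and s_cont: "continuous_map (scott_topology (opens X)) (scott_topology (opens (sigma_pow G))) s"
    and s_sect: "\<forall>U\<in>opens X. q (s U) = U"
  shows "(let E = scott_topology (opens X);
              ev = (\<lambda>(U, x). x \<in> q (s U))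
          in continuous_map (prod_topology E X) sierpinski ev
             \<and> (\<forall>U\<in>opens X. \<forall>x\<in>topspace X. ev (U, x) \<longleftrightarrow> x \<in> U)
             \<and> (\<forall>(Y :: 'y topology) f. continuous_map (prod_topology Y X) sierpinski f \<longrightarrow>
                  (\<exists>h. continuous_map Y E h
                       \<and> (\<forall>y\<in>topspace Y. \<forall>x\<in>topspace X. ev (h y, x) = f (y, x))
                       \<and> (\<forall>h'. continuous_map Y E h'
                              \<and> (\<forall>y\<in>topspace Y. \<forall>x\<in>topspace X. ev (h' y, x) = f (y, x))
                              \<longrightarrow> (\<forall>y\<in>topspace Y. h' y = h y)))))
         \<and> continuous_lattice (opens X)"
proof -
  have "frame_hom (sigma_pow G) X q"
    using pres unfolding is_presentation_def by blast
  then have approx: "scott_approximable (opens X)"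
    using sigma_pow_compact_open_nbhd s_cont s_sect
    by (rule scott_approximable_if_scott_continuous_section)
  define ev where "ev = (\<lambda>(U, x). x \<in> q (s U))"
  have ev: "\<forall>U\<in>opens X. \<forall>x. ev (U, x) \<longleftrightarrow> x \<in> U"
    using s_sect unfolding ev_def by simp
  have "continuous_map (prod_topology (scott_topology (opens X)) X) sierpinski ev"
    using continuous_map_scott_membership[OF approx]
    by (rule continuous_map_eq) (auto simp: ev topspace_scott_topology)
  then show ?thesis
    unfolding Let_def ev_def[symmetric]
    by (intro conjI allI impI ballI)
      (simp_all add: ev scott_opens_universal_property[OF approx ev]
        continuous_lattice_opens_if_scott_approximable[OF approx])
qed

end
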